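(* Let $\mathcal{M}$ be a matroid on $[m]$ with base polytope $P$, let $x_0\in P$, and let $\hat x=\chi(S)$ be the (random) extreme point of $P$ output by randomized pipage rounding started at $x_0$. Let $f:2^{[m]}\to\mathbb{R}$ be non-negative, monotone non-decreasing and submodular with marginals $f(T\cup\{i\})-f(T)\in[0,1]$, let $F(x)=\mathbb{E}_{X\sim\mathcal{D}(x)}[f(X)]$ be its multilinear extension, and let $\mu=F(x_0)$. Then for every $\delta\in[0,1)$, \[ \Pr\big[f(S)\le(1-\delta)\mu\big]\le \exp(-\delta^2\mu/2). \]
   Context: The base polytope of a matroid is the convex hull of the characteristic vectors $\chi(B)\in\{0,1\}^m$ of its bases. For $x\in[0,1]^m$, $\mathcal{D}(x)$ is the product distribution on $\{0,1\}^m$ (identified with subsets of $[m]$) with $\Pr[X_i=1]=x_i$ independently. Randomized pipage rounding started at $x_0\in P$: set $p=x_0$; while $p$ is not an extreme point of $P$, choose distinct $a,b\in[m]$ such that $p+z(e_a-e_b)\in P$ for all $z$ in some open neighborhood of $0$ (such $a,b$ exist whenever $p$ is not extreme), let $\ell=\min\{z: p+z(e_a-e_b)\in P\}<0<u=\max\{z:p+z(e_a-e_b)\in P\}$, and replace $p$ by $p+\ell(e_a-e_b)$ with probability $u/(u-\ell)$ and by $p+u(e_a-e_b)$ with probability $-\ell/(u-\ell)$ (independently of the past given the current state); output the final extreme point. The choice of $a,b$ may be arbitrary (subject to the stated condition). *)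

theory Defs
  imports "HOL-Analysis.Analysis" "HOL-Probability.Probability"
begin

text \<open>Matroid on the finite ground set UNIV :: 'n set (which plays the role of [m]),
  given by its family of bases (basis exchange axiom).\<close>
definition matroid_bases :: "('n::finite) set set \<Rightarrow> bool" where
  "matroid_bases Bs \<longleftrightarrow> Bs \<noteq> {} \<and>
     (\<forall>B1\<in>Bs. \<forall>B2\<in>Bs. \<forall>x\<in>B1 - B2. \<exists>y\<in>B2 - B1. insert y (B1 - {x}) \<in> Bs)"

definition chi :: "('n::finite) set \<Rightarrow> real ^ 'n" where
  "chi S = (\<chi> i. if i \<in> S then 1 else 0)"

definition base_polytope :: "('n::finite) set set \<Rightarrow> (real ^ 'n) set" where
  "base_polytope Bs = convex hull (chi ` Bs)"

definition prod_dist :: "real ^ ('n::finite) \<Rightarrow> 'n set pmf" where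
  "prod_dist x = map_pmf (\<lambda>X. {i. X i}) (Pi_pmf UNIV False (\<lambda>i. bernoulli_pmf (x $ i)))"

definition multilinear_ext :: "(('n::finite) set \<Rightarrow> real) \<Rightarrow> real ^ 'n \<Rightarrow> real" where
  "multilinear_ext f x = measure_pmf.expectation (prod_dist x) f"

definition admissible_pair :: "(real ^ ('n::finite)) set \<Rightarrow> real ^ 'n \<Rightarrow> 'n \<Rightarrow> 'n \<Rightarrow> bool" where
  "admissible_pair P p a b \<longleftrightarrow> a \<noteq> b \<and>
     (\<exists>e>0. \<forall>z. \<bar>z\<bar> < e \<longrightarrow> p + z *\<^sub>R (axis a 1 - axis b 1) \<in> P)"

text \<open>The state is the history of points
  (most recent first); the pair (a,b) is chosen by an arbitrary strategy sg that may
  depend on the whole history.\<close>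
definition pipage_step ::
  "(real ^ ('n::finite)) set \<Rightarrow> ((real ^ 'n) list \<Rightarrow> 'n \<times> 'n) \<Rightarrow> (real ^ 'n) list \<Rightarrow> (real ^ 'n) list pmf" where
  "pipage_step P sg h =
     (let p = hd h in
      if p extreme_point_of P then return_pmf h
      else (let a = fst (sg h); b = snd (sg h);
                d = axis a 1 - axis b 1;
                l = Inf {z. p + z *\<^sub>R d \<in> P};
                u = Sup {z. p + z *\<^sub>R d \<in> P}
            in map_pmf (\<lambda>c. (if c then p + l *\<^sub>R d else p + u *\<^sub>R d) # h)
                 (bernoulli_pmf (u / (u - l)))))"

definition pipage_run ::
  "(real ^ ('n::finite)) set \<Rightarrow> ((real ^ 'n) list \<Rightarrow> 'n \<times> 'n) \<Rightarrow> real ^ 'n \<Rightarrow> nat \<Rightarrow> (real ^ 'n) list pmf" where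
  "pipage_run P sg x0 n = ((\<lambda>M. bind_pmf M (pipage_step P sg)) ^^ n) (return_pmf [x0])"

end

theory Submission
  imports Defs
begin

text \<open>Write \<open>G(p)\<close> for the expectation of \<open>exp(-\<theta> f(X))\<close> under the product distribution
  \<open>D(p)\<close>. Since \<open>f\<close> is monotone and submodular, \<open>exp(-\<theta> f)\<close> has nonnegative second
  differences, so along every exchange direction \<open>e\<^sub>a - e\<^sub>b\<close> the multilinear function
  \<open>G\<close> is a concave quadratic. A pipage step is a mean-zero move along such a line, hence
  \<open>G\<close> of the current point is a supermartingale and \<open>E[G(x)] \<le> G(x\<^sub>0)\<close> for the output
  \<open>x\<close>. At a vertex \<open>\<chi>(S)\<close> we have \<open>G = exp(-\<theta> f(S))\<close>, so Markov's inequality gives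
  \<open>Pr[f(S) \<le> t] \<le> e\<^sup>\<theta>\<^sup>t G(x\<^sub>0)\<close>. Harris' inequality lets the usual Chernoff estimate
  \<open>G(x\<^sub>0) \<le> exp((e\<^sup>-\<^sup>\<theta> - 1) \<mu>)\<close> go through, and \<open>\<theta> = -ln(1 - \<delta>)\<close> gives the bound.
  Only compactness of the base polytope and its inclusion in the unit cube are used.\<close>

text \<open>For \<open>x\<close> in the unit cube, \<open>subset_expect I x g\<close> is the expectation of \<open>g X\<close> for the
  random set \<open>X \<subseteq> I\<close> containing each \<open>i\<close> independently with probability \<open>x i\<close>; as a
  polynomial in \<open>x\<close> it is the multilinear extension of \<open>g\<close>.\<close>

definition subset_weight :: "'a set \<Rightarrow> ('a \<Rightarrow> real) \<Rightarrow> 'a set \<Rightarrow> real" where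
  "subset_weight I x A = (\<Prod>i\<in>A. x i) * (\<Prod>i\<in>I - A. 1 - x i)"

definition subset_expect :: "'a set \<Rightarrow> ('a \<Rightarrow> real) \<Rightarrow> ('a set \<Rightarrow> real) \<Rightarrow> real" where
  "subset_expect I x g = (\<Sum>A\<in>Pow I. subset_weight I x A * g A)"

lemma subset_expect_empty [simp]: "subset_expect {} x g = g {}"
  by (simp add: subset_expect_def subset_weight_def)

lemma subset_expect_insert:
  assumes "finite I" "i \<notin> I"
  shows "subset_expect (insert i I) x g
           = (1 - x i) * subset_expect I x g + x i * subset_expect I x (\<lambda>A. g (insert i A))"
proof -
  have inj: "inj_on (insert i) (Pow I)"
    using assms(2) unfolding inj_on_def by (metis Pow_iff insert_ident subsetD)
  have weight_out: "subset_weight (insert i I) x A = (1 - x i) * subset_weight I x A" if "A \<subseteq> I" for A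
  proof -
    have "insert i I - A = insert i (I - A)" using that assms(2) by auto
    then show ?thesis using assms by (simp add: subset_weight_def)
  qed
  have weight_in: "subset_weight (insert i I) x (insert i A) = x i * subset_weight I x A"
    if "A \<subseteq> I" for A
  proof -
    have "insert i I - insert i A = I - A" "i \<notin> A" using that assms(2) by auto
    moreover have "finite A" using that assms(1) finite_subset by blast
    ultimately show ?thesis by (simp add: subset_weight_def)
  qed
  have "subset_expect (insert i I) x g
      = (\<Sum>A\<in>Pow I. subset_weight (insert i I) x A * g A)
        + (\<Sum>A\<in>insert i ` Pow I. subset_weight (insert i I) x A * g A)"
    unfolding subset_expect_def Pow_insert using assms by (intro sum.union_disjoint) auto
  also have "(\<Sum>A\<in>insert i ` Pow I. subset_weight (insert i I) x A * g A)
      = x i * subset_expect I x (\<lambda>A. g (insert i A))"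
    using inj by (simp add: sum.reindex subset_expect_def sum_distrib_left weight_in mult.assoc)
  also have "(\<Sum>A\<in>Pow I. subset_weight (insert i I) x A * g A) = (1 - x i) * subset_expect I x g"
    by (simp add: subset_expect_def sum_distrib_left weight_out mult.assoc)
  finally show ?thesis .
qed

lemma subset_expect_cong:
  "(\<And>i. i \<in> I \<Longrightarrow> x i = y i) \<Longrightarrow> (\<And>A. A \<subseteq> I \<Longrightarrow> g A = h A) \<Longrightarrow>
    subset_expect I x g = subset_expect I y h"
  unfolding subset_expect_def subset_weight_def
  by (intro sum.cong refl arg_cong2[where f="(*)"] prod.cong) auto

lemma subset_expect_mono:
  assumes "\<And>i. i \<in> I \<Longrightarrow> 0 \<le> x i \<and> x i \<le> 1" "\<And>A. A \<subseteq> I \<Longrightarrow> g A \<le> h A"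
  shows "subset_expect I x g \<le> subset_expect I x h"
proof -
  have "0 \<le> subset_weight I x A" if "A \<subseteq> I" for A
    using that assms(1) unfolding subset_weight_def by (intro mult_nonneg_nonneg prod_nonneg) auto
  then show ?thesis
    unfolding subset_expect_def using assms(2) by (intro sum_mono mult_left_mono) auto
qed

lemma subset_expect_nonneg:
  "(\<And>i. i \<in> I \<Longrightarrow> 0 \<le> x i \<and> x i \<le> 1) \<Longrightarrow> (\<And>A. A \<subseteq> I \<Longrightarrow> 0 \<le> g A) \<Longrightarrow>
    0 \<le> subset_expect I x g"
  using subset_expect_mono[of I x "\<lambda>_. 0" g] by (simp add: subset_expect_def)

lemma subset_expect_add: "subset_expect I x (\<lambda>A. g A + h A) = subset_expect I x g + subset_expect I x h"
  unfolding subset_expect_def by (simp add: algebra_simps sum.distrib)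

lemma subset_expect_diff: "subset_expect I x (\<lambda>A. g A - h A) = subset_expect I x g - subset_expect I x h"
  unfolding subset_expect_def by (simp add: algebra_simps sum_subtractf)

lemma subset_expect_cmult: "subset_expect I x (\<lambda>A. c * g A) = c * subset_expect I x g"
  unfolding subset_expect_def by (simp add: algebra_simps sum_distrib_left)

lemma subset_expect_const: "finite I \<Longrightarrow> subset_expect I x (\<lambda>_. c) = c"
  by (induction I rule: finite_induct) (auto simp: subset_expect_insert algebra_simps)

lemma subset_expect_vertex:
  assumes "finite I" "\<And>i. i \<in> I \<Longrightarrow> x i = (if i \<in> B then 1 else 0)"
  shows "subset_expect I x g = g (B \<inter> I)"
  using assms
proof (induction I arbitrary: g rule: finite_induct)
  case (insert i I)
  have "B \<inter> insert i I = (if i \<in> B then insert i (B \<inter> I) else B \<inter> I)" by auto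
  then show ?case using insert by (simp add: subset_expect_insert)
qed simp

lemma harris_inequality:
  assumes "finite I" "\<And>i. i \<in> I \<Longrightarrow> 0 \<le> x i \<and> x i \<le> 1"
    and "\<And>A B. A \<subseteq> B \<Longrightarrow> g A \<le> g B" "\<And>A B. A \<subseteq> B \<Longrightarrow> h B \<le> h A"
  shows "subset_expect I x (\<lambda>A. g A * h A) \<le> subset_expect I x g * subset_expect I x h"
  using assms
proof (induction I arbitrary: g h rule: finite_induct)
  case (insert i I)
  let ?E = "subset_expect I x" and ?q = "x i"
  define g1 where "g1 = (\<lambda>A. g (insert i A))"
  define h1 where "h1 = (\<lambda>A. h (insert i A))"
  have q: "0 \<le> ?q" "?q \<le> 1" and xI: "\<And>j. j \<in> I \<Longrightarrow> 0 \<le> x j \<and> x j \<le> 1"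
    using insert.prems by auto
  have IH0: "?E (\<lambda>A. g A * h A) \<le> ?E g * ?E h"
    using insert.IH[OF xI] insert.prems by blast
  have IH1: "?E (\<lambda>A. g1 A * h1 A) \<le> ?E g1 * ?E h1"
  proof (rule insert.IH[OF xI])
    show "g1 A \<le> g1 B" "h1 B \<le> h1 A" if "A \<subseteq> B" for A B
      unfolding g1_def h1_def using that by (intro insert.prems(2,3), blast)+
  qed
  have "?E g \<le> ?E g1" "?E h1 \<le> ?E h"
    unfolding g1_def h1_def using xI by (intro subset_expect_mono insert.prems(2,3); blast)+
  then have cross: "0 \<le> ?q * (1 - ?q) * ((?E g1 - ?E g) * (?E h - ?E h1))"
    using q by (intro mult_nonneg_nonneg) auto
  have "subset_expect (insert i I) x (\<lambda>A. g A * h A)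
      = (1 - ?q) * ?E (\<lambda>A. g A * h A) + ?q * ?E (\<lambda>A. g1 A * h1 A)"
    using insert.hyps by (simp add: subset_expect_insert g1_def h1_def)
  also have "\<dots> \<le> (1 - ?q) * (?E g * ?E h) + ?q * (?E g1 * ?E h1)"
    using IH0 IH1 q by (intro add_mono mult_left_mono) auto
  also have "\<dots> \<le> ((1 - ?q) * ?E g + ?q * ?E g1) * ((1 - ?q) * ?E h + ?q * ?E h1)"
    using cross by (simp add: algebra_simps)
  also have "\<dots> = subset_expect (insert i I) x g * subset_expect (insert i I) x h"
    using insert.hyps by (simp add: subset_expect_insert g1_def h1_def)
  finally show ?case .
qed simp

lemma expectation_prod_dist:
  fixes x :: "real ^ ('n::finite)"
  assumes "\<And>i. 0 \<le> x $ i \<and> x $ i \<le> 1"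
  shows "measure_pmf.expectation (prod_dist x) g = subset_expect UNIV (($) x) g"
proof -
  let ?M = "Pi_pmf UNIV False (\<lambda>i. bernoulli_pmf (x $ i))"
  have weight: "(\<Prod>i\<in>UNIV. if X i then x $ i else 1 - x $ i) = subset_weight UNIV (($) x) (Collect X)"
    for X :: "'n \<Rightarrow> bool"
    unfolding subset_weight_def by (subst prod.If_cases) (auto simp: Compl_eq_Diff_UNIV)
  have "measure_pmf.expectation (prod_dist x) g = measure_pmf.expectation ?M (\<lambda>X. g {i. X i})"
    by (simp add: prod_dist_def)
  also have "\<dots> = (\<Sum>X\<in>UNIV. pmf ?M X *\<^sub>R g {i. X i})"
    by (rule integral_measure_pmf) auto
  also have "\<dots> = (\<Sum>X\<in>UNIV. subset_weight UNIV (($) x) (Collect X) * g (Collect X))"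
    by (intro sum.cong refl arg_cong2[where f="(*\<^sub>R)"], subst pmf_Pi')
       (auto intro!: prod.cong simp: assms weight[symmetric])
  also have "\<dots> = subset_expect UNIV (($) x) g"
    unfolding subset_expect_def
    by (rule sum.reindex_bij_witness[where i="\<lambda>A i. i \<in> A" and j="\<lambda>X. {i. X i}"]) auto
  finally show ?thesis .
qed

lemma submodular_marginal_antimono:
  assumes submod: "\<And>S T. f (S \<union> T) + f (S \<inter> T) \<le> f S + f T"
    and "A \<subseteq> B" "i \<notin> B"
  shows "f (insert i B) - f B \<le> f (insert i A) - (f A :: real)"
proof -
  have "insert i A \<union> B = insert i B" "insert i A \<inter> B = A" using assms(2,3) by auto
  then show ?thesis using submod[of "insert i A" B] by simp
qed

lemma exp_neg_mult_le_chord: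
  fixes \<theta> y :: real
  assumes "0 \<le> y" "y \<le> 1"
  shows "exp (- \<theta> * y) \<le> 1 + (exp (- \<theta>) - 1) * y"
proof -
  have "exp ((1 - y) *\<^sub>R 0 + y *\<^sub>R (- \<theta>)) \<le> (1 - y) * exp 0 + y * exp (- \<theta>)"
    using assms by (intro convex_onD[OF exp_convex]) auto
  then show ?thesis by (simp add: algebra_simps)
qed

text \<open>Harris' inequality takes the place of independence in the usual Chernoff argument.\<close>

lemma subset_expect_exp_submodular_le:
  fixes f :: "'a set \<Rightarrow> real"
  assumes "finite I" "\<And>i. i \<in> I \<Longrightarrow> 0 \<le> x i \<and> x i \<le> 1"
    and nonneg: "\<And>S. f S \<ge> 0"
    and mono: "\<And>S T. S \<subseteq> T \<Longrightarrow> f S \<le> f T"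
    and submod: "\<And>S T. f (S \<union> T) + f (S \<inter> T) \<le> f S + f T"
    and marginal: "\<And>T i. 0 \<le> f (insert i T) - f T \<and> f (insert i T) - f T \<le> 1"
    and "0 \<le> \<theta>"
  shows "subset_expect I x (\<lambda>A. exp (- \<theta> * f A)) \<le> exp ((exp (- \<theta>) - 1) * subset_expect I x f)"
  using assms(1,2)
proof (induction I rule: finite_induct)
  case empty
  have "- \<theta> * f {} \<le> (exp (- \<theta>) - 1) * f {}"
    using nonneg[of "{}"] exp_ge_add_one_self[of "- \<theta>"] by (intro mult_right_mono) auto
  then show ?case by simp
next
  case (insert i I)
  let ?E = "subset_expect I x" and ?q = "x i" and ?c = "exp (- \<theta>) - 1"
  define m where "m = (\<lambda>A. f (insert i A) - f A)"
  define G where "G = ?E (\<lambda>A. exp (- \<theta> * f A))"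
  define D where "D = ?E (\<lambda>A. f (insert i A)) - ?E f"
  have q: "0 \<le> ?q" "?q \<le> 1" and xI: "\<And>j. j \<in> I \<Longrightarrow> 0 \<le> x j \<and> x j \<le> 1"
    using insert.prems by auto
  have G_le: "G \<le> exp (?c * ?E f)" using insert.IH[OF xI] by (simp add: G_def)
  have G_nonneg: "0 \<le> G" unfolding G_def using xI by (intro subset_expect_nonneg) auto
  have m_antimono: "m B \<le> m A" if "A \<subseteq> B" for A B
  proof (cases "i \<in> B")
    case True
    then show ?thesis using marginal[of i A] by (simp add: m_def insert_absorb)
  qed (use submodular_marginal_antimono[OF submod that] in \<open>simp add: m_def\<close>)
  have exp_chord: "exp (- \<theta> * m A) \<le> 1 + ?c * m A" for A
    using marginal unfolding m_def by (intro exp_neg_mult_le_chord) auto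
  have "?E (\<lambda>A. exp (- \<theta> * f (insert i A))) = ?E (\<lambda>A. exp (- \<theta> * m A) * exp (- \<theta> * f A))"
    by (simp add: m_def exp_add[symmetric] algebra_simps)
  also have "\<dots> \<le> ?E (\<lambda>A. exp (- \<theta> * m A)) * G"
    unfolding G_def
  proof (rule harris_inequality[OF insert.hyps(1) xI])
    show "exp (- \<theta> * m A) \<le> exp (- \<theta> * m B)" "exp (- \<theta> * f B) \<le> exp (- \<theta> * f A)"
      if "A \<subseteq> B" for A B
      using m_antimono[OF that] mono[OF that] \<open>0 \<le> \<theta>\<close> by (simp_all add: mult_left_mono)
  qed
  also have "\<dots> \<le> ?E (\<lambda>A. 1 + ?c * m A) * G"
    using G_nonneg xI exp_chord by (intro mult_right_mono subset_expect_mono) auto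
  also have "?E (\<lambda>A. 1 + ?c * m A) = 1 + ?c * D"
    using insert.hyps(1)
    by (simp add: subset_expect_add subset_expect_cmult subset_expect_const subset_expect_diff m_def D_def)
  finally have step: "?E (\<lambda>A. exp (- \<theta> * f (insert i A))) \<le> (1 + ?c * D) * G" .
  have "subset_expect (insert i I) x (\<lambda>A. exp (- \<theta> * f A))
      = (1 - ?q) * G + ?q * ?E (\<lambda>A. exp (- \<theta> * f (insert i A)))"
    using insert.hyps by (simp add: subset_expect_insert G_def)
  also have "\<dots> \<le> G * (1 + ?q * ?c * D)"
    using mult_left_mono[OF step q(1)] by (simp add: algebra_simps)
  also have "\<dots> \<le> G * exp (?q * ?c * D)"
    using G_nonneg exp_ge_add_one_self[of "?q * ?c * D"] by (intro mult_left_mono) (simp_all add: add.commute)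
  also have "\<dots> \<le> exp (?c * ?E f) * exp (?q * ?c * D)"
    using G_le by (intro mult_right_mono) auto
  also have "\<dots> = exp (?c * subset_expect (insert i I) x f)"
    using insert.hyps by (simp add: subset_expect_insert D_def exp_add[symmetric] algebra_simps)
  finally show ?case .
qed

lemma exp_neg_submodular_second_difference_nonneg:
  fixes f :: "'a set \<Rightarrow> real"
  assumes mono: "\<And>S T. S \<subseteq> T \<Longrightarrow> f S \<le> f T"
    and submod: "\<And>S T. f (S \<union> T) + f (S \<inter> T) \<le> f S + f T"
    and "0 \<le> \<theta>" "a \<noteq> b"
  shows "0 \<le> exp (- \<theta> * f (insert a (insert b R))) - exp (- \<theta> * f (insert a R))
             - exp (- \<theta> * f (insert b R)) + exp (- \<theta> * f R)"
proof -
  define e where "e = exp (- \<theta> * f R)"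
  define \<alpha> where "\<alpha> = exp (- \<theta> * (f (insert a R) - f R))"
  define \<beta> where "\<beta> = exp (- \<theta> * (f (insert b R) - f R))"
  have "\<alpha> \<le> 1" "\<beta> \<le> 1"
    unfolding \<alpha>_def \<beta>_def using mono[OF subset_insertI, of R a] mono[OF subset_insertI, of R b] \<open>0 \<le> \<theta>\<close>
    by (auto intro!: mult_nonneg_nonneg)
  then have corner: "0 \<le> e * ((1 - \<alpha>) * (1 - \<beta>))" unfolding e_def by simp
  have "insert a R \<union> insert b R = insert a (insert b R)" "insert a R \<inter> insert b R = R"
    using \<open>a \<noteq> b\<close> by auto
  then have "\<theta> * (f (insert a (insert b R)) + f R) \<le> \<theta> * (f (insert a R) + f (insert b R))"
    using submod[of "insert a R" "insert b R"] \<open>0 \<le> \<theta>\<close> by (intro mult_left_mono) simp_all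
  then have "e * \<alpha> * \<beta> \<le> exp (- \<theta> * f (insert a (insert b R)))"
    unfolding e_def \<alpha>_def \<beta>_def by (simp add: exp_add[symmetric] algebra_simps)
  moreover have "exp (- \<theta> * f (insert a R)) = e * \<alpha>" "exp (- \<theta> * f (insert b R)) = e * \<beta>"
    unfolding e_def \<alpha>_def \<beta>_def by (simp_all add: exp_add[symmetric] algebra_simps)
  ultimately show ?thesis using corner unfolding e_def by (simp add: algebra_simps)
qed

lemma two_point_lottery_concave_quadratic:
  fixes l u s c :: real
  assumes "l < 0" "0 < u" "0 \<le> s" "\<And>z. Q z = Q 0 + c * z - s * z\<^sup>2"
  shows "u / (u - l) * Q l + (1 - u / (u - l)) * Q u \<le> Q 0"
proof -
  define \<pi> where "\<pi> = u / (u - l)"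
  have mean: "\<pi> * l + (1 - \<pi>) * u = 0" and "0 \<le> \<pi>" "\<pi> \<le> 1"
    using assms(1,2) by (auto simp: \<pi>_def field_simps)
  have "\<pi> * Q l + (1 - \<pi>) * Q u = Q 0 + c * (\<pi> * l + (1 - \<pi>) * u) - s * (\<pi> * l\<^sup>2 + (1 - \<pi>) * u\<^sup>2)"
    by (simp add: assms(4)[of l] assms(4)[of u] algebra_simps)
  also have "\<dots> \<le> Q 0"
    using mean \<open>0 \<le> \<pi>\<close> \<open>\<pi> \<le> 1\<close> \<open>0 \<le> s\<close> by simp
  finally show ?thesis unfolding \<pi>_def .
qed

lemma subset_expect_along_exchange:
  fixes p :: "real ^ ('n::finite)"
  assumes "a \<noteq> b"
  defines "J \<equiv> UNIV - {a, b}"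
  shows "subset_expect UNIV (($) (p + z *\<^sub>R (axis a 1 - axis b 1))) g
    = (1 - (p $ a + z)) * ((1 - (p $ b - z)) * subset_expect J (($) p) g
                             + (p $ b - z) * subset_expect J (($) p) (\<lambda>A. g (insert b A)))
      + (p $ a + z) * ((1 - (p $ b - z)) * subset_expect J (($) p) (\<lambda>A. g (insert a A))
                         + (p $ b - z) * subset_expect J (($) p) (\<lambda>A. g (insert a (insert b A))))"
proof -
  let ?y = "p + z *\<^sub>R (axis a 1 - axis b 1)"
  have UNIV_eq: "UNIV = insert a (insert b J)" and "a \<notin> insert b J" "b \<notin> J"
    using assms by auto
  have y_a: "?y $ a = p $ a + z" and y_b: "?y $ b = p $ b - z"
    using assms by (auto simp: axis_def)
  have "subset_expect J (($) ?y) h = subset_expect J (($) p) h" for h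
    unfolding J_def by (intro subset_expect_cong) (auto simp: axis_def)
  then show ?thesis
    unfolding UNIV_eq subset_expect_insert[OF finite \<open>a \<notin> insert b J\<close>]
      subset_expect_insert[OF finite \<open>b \<notin> J\<close>] y_a y_b by simp
qed

text \<open>Along the direction \<open>e\<^sub>a - e\<^sub>b\<close> the multilinear extension is a quadratic whose
  leading coefficient is minus an average of second differences of \<open>g\<close>.\<close>

lemma subset_expect_exchange_lottery_le:
  fixes p :: "real ^ ('n::finite)"
  assumes "a \<noteq> b" "\<And>i. 0 \<le> p $ i \<and> p $ i \<le> 1" "l < 0" "0 < u"
    and second_diff: "\<And>A. 0 \<le> g (insert a (insert b A)) - g (insert a A) - g (insert b A) + g A"
  defines "d \<equiv> axis a 1 - axis b 1"
  shows "u / (u - l) * subset_expect UNIV (($) (p + l *\<^sub>R d)) g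
       + (1 - u / (u - l)) * subset_expect UNIV (($) (p + u *\<^sub>R d)) g
       \<le> subset_expect UNIV (($) p) g"
proof -
  define J where "J = UNIV - {a, b}"
  define E0 where "E0 = subset_expect J (($) p) g"
  define Ea where "Ea = subset_expect J (($) p) (\<lambda>A. g (insert a A))"
  define Eb where "Eb = subset_expect J (($) p) (\<lambda>A. g (insert b A))"
  define Eab where "Eab = subset_expect J (($) p) (\<lambda>A. g (insert a (insert b A)))"
  define Q where "Q = (\<lambda>z. subset_expect UNIV (($) (p + z *\<^sub>R d)) g)"
  have Q_expand: "Q z = (1 - (p $ a + z)) * ((1 - (p $ b - z)) * E0 + (p $ b - z) * Eb)
     + (p $ a + z) * ((1 - (p $ b - z)) * Ea + (p $ b - z) * Eab)" for z
    unfolding Q_def d_def E0_def Ea_def Eb_def Eab_def J_def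
    by (rule subset_expect_along_exchange[OF assms(1)])
  have Q_quadratic: "Q z = Q 0 + ((p $ b - p $ a) * (E0 + Eab) - (p $ b + 1 - p $ a) * Eb
      + (1 - p $ b + p $ a) * Ea) * z - (Eab - Ea - Eb + E0) * z\<^sup>2" for z
    unfolding Q_expand by (simp add: algebra_simps power2_eq_square)
  have curvature: "0 \<le> Eab - Ea - Eb + E0"
    unfolding E0_def Ea_def Eb_def Eab_def subset_expect_add[symmetric] subset_expect_diff[symmetric]
    using assms(2) second_diff by (intro subset_expect_nonneg) auto
  have "u / (u - l) * Q l + (1 - u / (u - l)) * Q u \<le> Q 0"
    by (rule two_point_lottery_concave_quadratic[OF assms(3,4) curvature Q_quadratic])
  then show ?thesis by (simp add: Q_def)
qed

lemma base_polytope_subset_unit_box: "base_polytope Bs \<subseteq> cbox 0 (1 :: real ^ ('n::finite))"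
  unfolding base_polytope_def
  by (intro hull_minimal convex_box) (auto simp: chi_def mem_box_cart)

lemma base_polytope_coordinate_bounds:
  "p \<in> base_polytope Bs \<Longrightarrow> 0 \<le> p $ i \<and> p $ i \<le> 1"
  using base_polytope_subset_unit_box[of Bs] by (auto simp: subset_iff mem_box_cart)

lemma compact_base_polytope: "compact (base_polytope (Bs :: ('n::finite) set set))"
  unfolding base_polytope_def by (intro finite_imp_compact_convex_hull finite_imageI) simp

lemma extreme_point_of_base_polytope:
  "p extreme_point_of base_polytope Bs \<Longrightarrow> \<exists>B\<in>Bs. p = chi B"
  unfolding base_polytope_def using extreme_point_of_convex_hull by fastforce

lemma chi_eq_one_iff [simp]: "chi B $ i = 1 \<longleftrightarrow> i \<in> B"
  by (simp add: chi_def)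

lemma chord_through_relative_interior_point:
  fixes P :: "'a::real_normed_vector set"
  assumes "compact P" "d \<noteq> 0" "e > 0" "\<And>z. \<bar>z\<bar> < e \<Longrightarrow> p + z *\<^sub>R d \<in> P"
  defines "T \<equiv> {z. p + z *\<^sub>R d \<in> P}"
  shows "Inf T < 0" "0 < Sup T" "p + Inf T *\<^sub>R d \<in> P" "p + Sup T *\<^sub>R d \<in> P"
proof -
  obtain R where R: "\<And>q. q \<in> P \<Longrightarrow> norm q \<le> R"
    using compact_imp_bounded[OF assms(1)] by (auto simp: bounded_iff)
  have "\<bar>z\<bar> \<le> 2 * R / norm d" if "z \<in> T" for z
  proof -
    have "\<bar>z\<bar> * norm d = norm ((p + z *\<^sub>R d) - p)" by simp
    also have "\<dots> \<le> norm (p + z *\<^sub>R d) + norm p"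
      by (rule norm_triangle_ineq4)
    also have "\<dots> \<le> 2 * R"
      using R[of "p + z *\<^sub>R d"] R[of p] assms(3) assms(4)[of 0] that unfolding T_def by simp
    finally show ?thesis using assms(2) by (simp add: field_simps)
  qed
  then have bdd: "bdd_below T" "bdd_above T"
    by (auto intro!: bdd_belowI[of _ "- (2 * R / norm d)"] bdd_aboveI[of _ "2 * R / norm d"]
        simp: abs_le_iff minus_le_iff)
  have "closed ((\<lambda>z. p + z *\<^sub>R d) -` P)"
    using compact_imp_closed[OF assms(1)] by (intro continuous_closed_vimage continuous_intros)
  then have "closed T" by (simp add: T_def vimage_def)
  moreover have half: "e / 2 \<in> T" "- (e / 2) \<in> T"
    unfolding T_def using assms(3) assms(4)[of "e / 2"] assms(4)[of "- (e / 2)"] by auto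
  ultimately have "Inf T \<in> T" "Sup T \<in> T"
    using closed_contains_Inf closed_contains_Sup bdd by blast+
  then show "p + Inf T *\<^sub>R d \<in> P" "p + Sup T *\<^sub>R d \<in> P" unfolding T_def by auto
  show "Inf T < 0" using cInf_lower[OF half(2) bdd(1)] assms(3) by simp
  show "0 < Sup T" using cSup_upper[OF half(1) bdd(2)] assms(3) by simp
qed

lemma iterated_bind_pmf_supermartingale:
  fixes G :: "'a \<Rightarrow> ennreal"
  assumes "x0 \<in> S"
    and invariant: "\<And>x. x \<in> S \<Longrightarrow> set_pmf (K x) \<subseteq> S"
    and decreasing: "\<And>x. x \<in> S \<Longrightarrow> (\<integral>\<^sup>+y. G y \<partial>K x) \<le> G x"
  shows "set_pmf (((\<lambda>M. bind_pmf M K) ^^ n) (return_pmf x0)) \<subseteq> S \<and>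
         (\<integral>\<^sup>+y. G y \<partial>((\<lambda>M. bind_pmf M K) ^^ n) (return_pmf x0)) \<le> G x0"
proof (induction n)
  case (Suc n)
  let ?M = "((\<lambda>M. bind_pmf M K) ^^ n) (return_pmf x0)"
  have "(\<integral>\<^sup>+y. G y \<partial>bind_pmf ?M K) = (\<integral>\<^sup>+x. (\<integral>\<^sup>+y. G y \<partial>K x) \<partial>?M)"
    by simp
  also have "\<dots> \<le> (\<integral>\<^sup>+x. G x \<partial>?M)"
    using Suc.IH decreasing by (intro nn_integral_mono_AE AE_pmfI) blast
  also have "\<dots> \<le> G x0" using Suc.IH by blast
  finally show ?case using Suc.IH invariant by auto
qed (use assms(1) in simp)

lemma pipage_step_nonextreme:
  fixes P :: "(real ^ ('n::finite)) set"
  assumes "compact P" "\<not> hd h extreme_point_of P" "sg h = (a, b)" "admissible_pair P (hd h) a b"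
  defines "d \<equiv> axis a 1 - axis b 1"
  obtains l u where "l < 0" "0 < u" "hd h + l *\<^sub>R d \<in> P" "hd h + u *\<^sub>R d \<in> P"
    and "pipage_step P sg h
           = map_pmf (\<lambda>c. (if c then hd h + l *\<^sub>R d else hd h + u *\<^sub>R d) # h) (bernoulli_pmf (u / (u - l)))"
proof -
  obtain e where "a \<noteq> b" "e > 0" and segment: "\<And>z. \<bar>z\<bar> < e \<Longrightarrow> hd h + z *\<^sub>R d \<in> P"
    using assms(4) unfolding admissible_pair_def d_def by blast
  have "d $ a = 1" using \<open>a \<noteq> b\<close> by (simp add: d_def axis_def)
  then have "d \<noteq> 0" by auto
  let ?T = "{z. hd h + z *\<^sub>R d \<in> P}"
  have "pipage_step P sg h
      = map_pmf (\<lambda>c. (if c then hd h + Inf ?T *\<^sub>R d else hd h + Sup ?T *\<^sub>R d) # h)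
          (bernoulli_pmf (Sup ?T / (Sup ?T - Inf ?T)))"
    using assms(2,3) unfolding d_def by (simp add: pipage_step_def Let_def)
  then show ?thesis
    using that chord_through_relative_interior_point[OF assms(1) \<open>d \<noteq> 0\<close> \<open>e > 0\<close> segment] by blast
qed

lemma pipage_step_supermartingale:
  fixes P :: "(real ^ ('n::finite)) set" and g :: "'n set \<Rightarrow> real"
  assumes "compact P" "P \<subseteq> cbox 0 1" "hd h \<in> P"
    and adm: "\<not> hd h extreme_point_of P \<Longrightarrow> admissible_pair P (hd h) (fst (sg h)) (snd (sg h))"
    and nonneg: "\<And>A. 0 \<le> g A"
    and second_diff: "\<And>a b A. a \<noteq> b \<Longrightarrow> 0 \<le> g (insert a (insert b A)) - g (insert a A) - g (insert b A) + g A"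
  shows "set_pmf (pipage_step P sg h) \<subseteq> {h'. hd h' \<in> P} \<and>
         (\<integral>\<^sup>+h'. ennreal (subset_expect UNIV (($) (hd h')) g) \<partial>pipage_step P sg h)
           \<le> ennreal (subset_expect UNIV (($) (hd h)) g)"
proof (cases "hd h extreme_point_of P")
  case True
  then show ?thesis using assms(3) by (simp add: pipage_step_def)
next
  case False
  let ?G = "\<lambda>q. subset_expect UNIV (($) q) g"
  define p where "p = hd h"
  obtain a b where ab: "sg h = (a, b)" by fastforce
  define d where "d = (axis a 1 - axis b 1 :: real ^ 'n)"
  have "admissible_pair P p a b" using adm[OF False] ab by (simp add: p_def)
  then have "a \<noteq> b" by (simp add: admissible_pair_def)
  obtain l u where l: "l < 0" "p + l *\<^sub>R d \<in> P" and u: "0 < u" "p + u *\<^sub>R d \<in> P" and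
    step: "pipage_step P sg h
             = map_pmf (\<lambda>c. (if c then p + l *\<^sub>R d else p + u *\<^sub>R d) # h) (bernoulli_pmf (u / (u - l)))"
    using pipage_step_nonextreme[where sg = sg, OF assms(1) False ab \<open>admissible_pair P p a b\<close>[unfolded p_def]]
    unfolding p_def d_def by blast
  have box: "\<And>q i. q \<in> P \<Longrightarrow> 0 \<le> q $ i \<and> q $ i \<le> 1"
    using assms(2) by (auto simp: mem_box_cart)
  define \<pi> where "\<pi> = u / (u - l)"
  have "0 \<le> \<pi>" "\<pi> \<le> 1" using l u by (auto simp: \<pi>_def field_simps)
  moreover have "0 \<le> ?G (p + l *\<^sub>R d)" "0 \<le> ?G (p + u *\<^sub>R d)"
    using l(2) u(2) box nonneg by (auto intro!: subset_expect_nonneg)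
  ultimately have "(\<integral>\<^sup>+h'. ennreal (?G (hd h')) \<partial>pipage_step P sg h)
      = ennreal (\<pi> * ?G (p + l *\<^sub>R d) + (1 - \<pi>) * ?G (p + u *\<^sub>R d))"
    by (simp add: step \<pi>_def[symmetric] ennreal_plus ennreal_mult mult.commute)
  also have "\<dots> \<le> ennreal (?G p)"
    unfolding \<pi>_def d_def
    using subset_expect_exchange_lottery_le[OF \<open>a \<noteq> b\<close> box[OF assms(3)[folded p_def]] l(1) u(1)]
      second_diff[OF \<open>a \<noteq> b\<close>] by (intro ennreal_leI) blast
  finally show ?thesis using l(2) u(2) by (auto simp: step p_def)
qed

lemma pipage_run_supermartingale:
  fixes P :: "(real ^ ('n::finite)) set" and g :: "'n set \<Rightarrow> real"
  assumes "compact P" "P \<subseteq> cbox 0 1" "x0 \<in> P"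
    and adm: "\<And>h. hd h \<in> P \<Longrightarrow> \<not> hd h extreme_point_of P \<Longrightarrow>
                 admissible_pair P (hd h) (fst (sg h)) (snd (sg h))"
    and nonneg: "\<And>A. 0 \<le> g A"
    and second_diff: "\<And>a b A. a \<noteq> b \<Longrightarrow> 0 \<le> g (insert a (insert b A)) - g (insert a A) - g (insert b A) + g A"
  shows "(\<integral>\<^sup>+h. ennreal (subset_expect UNIV (($) (hd h)) g) \<partial>pipage_run P sg x0 N)
           \<le> ennreal (subset_expect UNIV (($) x0) g)"
proof -
  have step: "set_pmf (pipage_step P sg h) \<subseteq> {h'. hd h' \<in> P}"
    "(\<integral>\<^sup>+h'. ennreal (subset_expect UNIV (($) (hd h')) g) \<partial>pipage_step P sg h)
       \<le> ennreal (subset_expect UNIV (($) (hd h)) g)" if "hd h \<in> P" for h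
    using pipage_step_supermartingale[where sg = sg, OF assms(1,2) that adm[OF that] nonneg second_diff]
    by blast+
  have "set_pmf (pipage_run P sg x0 N) \<subseteq> {h. hd h \<in> P} \<and>
        (\<integral>\<^sup>+h. ennreal (subset_expect UNIV (($) (hd h)) g) \<partial>pipage_run P sg x0 N)
          \<le> ennreal (subset_expect UNIV (($) (hd [x0])) g)"
    unfolding pipage_run_def by (rule iterated_bind_pmf_supermartingale) (use step assms(3) in auto)
  then show ?thesis by simp
qed

lemma pipage_lower_tail_le:
  fixes Bs :: "('n::finite) set set" and f :: "'n set \<Rightarrow> real"
  assumes "x0 \<in> base_polytope Bs"
    and adm: "\<And>h. hd h \<in> base_polytope Bs \<Longrightarrow> \<not> hd h extreme_point_of base_polytope Bs \<Longrightarrow>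
                 admissible_pair (base_polytope Bs) (hd h) (fst (sg h)) (snd (sg h))"
    and mono: "\<And>S T. S \<subseteq> T \<Longrightarrow> f S \<le> f T"
    and submod: "\<And>S T. f (S \<union> T) + f (S \<inter> T) \<le> f S + f T"
    and "0 \<le> \<theta>"
  shows "measure_pmf.prob (pipage_run (base_polytope Bs) sg x0 N)
           {h. hd h extreme_point_of base_polytope Bs \<and> f {i. hd h $ i = 1} \<le> t}
         \<le> exp (\<theta> * t) * subset_expect UNIV (($) x0) (\<lambda>A. exp (- \<theta> * f A))"
proof -
  let ?P = "base_polytope Bs"
  let ?R = "pipage_run ?P sg x0 N"
  let ?G = "\<lambda>q. subset_expect UNIV (($) q) (\<lambda>A. exp (- \<theta> * f A))"
  define E where "E = {h. hd h extreme_point_of ?P \<and> f {i. hd h $ i = 1} \<le> t}"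
  have markov: "indicator E h \<le> ennreal (exp (\<theta> * t)) * ennreal (?G (hd h))" for h
  proof (cases "h \<in> E")
    case True
    then obtain B where B: "hd h = chi B" "f B \<le> t"
      using extreme_point_of_base_polytope unfolding E_def by fastforce
    have "?G (chi B) = exp (- \<theta> * f B)"
      by (subst subset_expect_vertex[where B = B]) (auto simp: chi_def)
    moreover have "\<theta> * f B \<le> \<theta> * t" using B(2) \<open>0 \<le> \<theta>\<close> by (rule mult_left_mono)
    ultimately have "ennreal 1 \<le> ennreal (exp (\<theta> * t) * ?G (hd h))"
      unfolding B(1) by (intro ennreal_leI) (simp add: exp_add[symmetric])
    then show ?thesis
      using True by (simp add: ennreal_mult')
  qed simp
  have "emeasure ?R E = (\<integral>\<^sup>+h. indicator E h \<partial>?R)" by simp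
  also have "\<dots> \<le> (\<integral>\<^sup>+h. ennreal (exp (\<theta> * t)) * ennreal (?G (hd h)) \<partial>?R)"
    by (intro nn_integral_mono markov)
  also have "\<dots> = ennreal (exp (\<theta> * t)) * (\<integral>\<^sup>+h. ennreal (?G (hd h)) \<partial>?R)"
    by (rule nn_integral_cmult) simp
  also have "\<dots> \<le> ennreal (exp (\<theta> * t)) * ennreal (?G x0)"
  proof (intro mult_left_mono pipage_run_supermartingale)
    show "0 \<le> exp (- \<theta> * f (insert a (insert b A))) - exp (- \<theta> * f (insert a A))
               - exp (- \<theta> * f (insert b A)) + exp (- \<theta> * f A)" if "a \<noteq> b" for a b A
      by (rule exp_neg_submodular_second_difference_nonneg[OF mono submod \<open>0 \<le> \<theta>\<close> that])
  qed (use assms(1) adm compact_base_polytope base_polytope_subset_unit_box in auto)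
  finally have "emeasure ?R E \<le> ennreal (exp (\<theta> * t)) * ennreal (?G x0)" .
  moreover have "0 \<le> ?G x0"
    using base_polytope_coordinate_bounds[OF assms(1)] by (intro subset_expect_nonneg) auto
  ultimately show ?thesis
    unfolding E_def[symmetric] measure_pmf.emeasure_eq_measure
    by (simp add: ennreal_mult'[symmetric] ennreal_le_iff)
qed

lemma one_minus_mult_ln_one_minus_ge:
  fixes \<delta> :: real
  assumes "0 \<le> \<delta>" "\<delta> < 1"
  shows "- \<delta> + \<delta>\<^sup>2 / 2 \<le> (1 - \<delta>) * ln (1 - \<delta>)"
proof -
  define g where "g = (\<lambda>t::real. (1 - t) * ln (1 - t) + t - t\<^sup>2 / 2)"
  have "g 0 \<le> g \<delta>"
  proof (rule deriv_nonneg_imp_mono[where g = g and a = 0 and b = \<delta> and g' = "\<lambda>t. - ln (1 - t) - t"])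
    fix t assume "t \<in> {0..\<delta>}"
    then have "1 - t > 0" using assms by auto
    show "(g has_real_derivative - ln (1 - t) - t) (at t)"
      unfolding g_def using \<open>1 - t > 0\<close> by (auto intro!: derivative_eq_intros)
    show "0 \<le> - ln (1 - t) - t" using ln_le_minus_one[OF \<open>1 - t > 0\<close>] by simp
  qed (use assms in auto)
  then show ?thesis by (simp add: g_def)
qed

theorem corollary3p4:
  fixes Bs :: "('n::finite) set set"
    and f :: "'n set \<Rightarrow> real"
    and x0 :: "real ^ 'n"
    and sg :: "(real ^ 'n) list \<Rightarrow> 'n \<times> 'n"
    and \<delta> :: real
    and N :: nat
  assumes "matroid_bases Bs"
    and "x0 \<in> base_polytope Bs"
    and "\<And>h. hd h \<in> base_polytope Bs \<Longrightarrow> \<not> (hd h extreme_point_of base_polytope Bs) \<Longrightarrow>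
           admissible_pair (base_polytope Bs) (hd h) (fst (sg h)) (snd (sg h))"
    and "\<And>S. f S \<ge> 0"
    and "\<And>S T. S \<subseteq> T \<Longrightarrow> f S \<le> f T"
    and "\<And>S T. f (S \<union> T) + f (S \<inter> T) \<le> f S + f T"
    and "\<And>T i. 0 \<le> f (insert i T) - f T \<and> f (insert i T) - f T \<le> 1"
    and "0 \<le> \<delta>" and "\<delta> < 1"
  shows "measure_pmf.prob (pipage_run (base_polytope Bs) sg x0 N)
           {h. hd h extreme_point_of base_polytope Bs \<and>
               f {i. hd h $ i = 1} \<le> (1 - \<delta>) * multilinear_ext f x0}
         \<le> exp (- (\<delta>\<^sup>2 * multilinear_ext f x0 / 2))"
proof -
  define \<mu> where "\<mu> = multilinear_ext f x0"
  define \<theta> where "\<theta> = - ln (1 - \<delta>)"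
  have box: "\<And>i. 0 \<le> x0 $ i \<and> x0 $ i \<le> 1" by (rule base_polytope_coordinate_bounds[OF assms(2)])
  have \<mu>: "\<mu> = subset_expect UNIV (($) x0) f"
    unfolding \<mu>_def multilinear_ext_def by (rule expectation_prod_dist[OF box])
  have "0 \<le> \<mu>" unfolding \<mu> using box assms(4) by (intro subset_expect_nonneg) auto
  have "0 \<le> \<theta>" and exp_\<theta>: "exp (- \<theta>) = 1 - \<delta>" using assms(8,9) by (simp_all add: \<theta>_def)
  have "measure_pmf.prob (pipage_run (base_polytope Bs) sg x0 N)
          {h. hd h extreme_point_of base_polytope Bs \<and> f {i. hd h $ i = 1} \<le> (1 - \<delta>) * \<mu>}
        \<le> exp (\<theta> * ((1 - \<delta>) * \<mu>)) * subset_expect UNIV (($) x0) (\<lambda>A. exp (- \<theta> * f A))"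
    by (rule pipage_lower_tail_le[OF assms(2,3,5,6) \<open>0 \<le> \<theta>\<close>])
  also have "\<dots> \<le> exp (\<theta> * ((1 - \<delta>) * \<mu>)) * exp ((exp (- \<theta>) - 1) * \<mu>)"
    unfolding \<mu> using box
    by (intro mult_left_mono subset_expect_exp_submodular_le[OF _ _ assms(4-7) \<open>0 \<le> \<theta>\<close>]) auto
  also have "\<dots> = exp (- (\<mu> * ((1 - \<delta>) * ln (1 - \<delta>))) - \<delta> * \<mu>)"
    unfolding exp_\<theta> by (simp add: \<theta>_def exp_add[symmetric] algebra_simps)
  also have "\<dots> \<le> exp (- (\<delta>\<^sup>2 * \<mu> / 2))"
    using mult_left_mono[OF one_minus_mult_ln_one_minus_ge[OF assms(8,9)] \<open>0 \<le> \<mu>\<close>]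
    by (simp add: algebra_simps)
  finally show ?thesis unfolding \<mu>_def .
qed

end
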